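(* For $\epsilon\in(0,1)$ and every $x\in\{0,1\}^n$ with Hamming weight $|x|\in[n/2,\,n/2+0.05\,\epsilon\sqrt n]$, if $\mathbf T\sim\mathsf{Talagrand}(n,\epsilon)$ then $\Pr_{\mathbf T}\big[|S_{\mathbf T}(x)|=1\big]>0.03$.
   Context: $\mathsf{Talagrand}(n,\epsilon)$ is the following distribution: let $L=0.1\cdot 2^{\sqrt n/\epsilon}$; independently for each $i=1,\dots,L$, draw a set $\mathbf T_i\subseteq[n]$ by choosing $\sqrt n/\epsilon$ elements of $[n]$ independently and uniformly with replacement (quantities are assumed/rounded to be integers). For $T=(T_1,\dots,T_L)$ and $x\in\{0,1\}^n$, $T_\ell(x)=1$ iff $x_j=1$ for all $j\in T_\ell$, and $S_T(x)=\{\ell\in[L]:T_\ell(x)=1\}$. $|x|$ denotes the number of ones in $x$. *)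

theory Defs
  imports "HOL-Probability.Probability"
begin

definition tal_k :: "nat \<Rightarrow> real \<Rightarrow> nat" where
  "tal_k n \<epsilon> = nat \<lceil>sqrt (real n) / \<epsilon>\<rceil>"

definition tal_L :: "nat \<Rightarrow> real \<Rightarrow> nat" where
  "tal_L n \<epsilon> = nat \<lceil>(0.1::real) * 2 ^ tal_k n \<epsilon>\<rceil>"

text \<open>Talagrand(n, eps): a family T_1..T_L of subsets of [n] = {1..n}; each T_l
  is the set of k = tal_k n eps elements of [n] drawn independently and uniformly
  with replacement, independently over l.  The joint draw is realised as a
  uniformly random function (l, j) \<mapsto> element of [n] for l in [L], j in [k]
  (uniform on the product = independent uniform coordinates).\<close>
definition talagrand :: "nat \<Rightarrow> real \<Rightarrow> (nat \<Rightarrow> nat set) pmf" where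
  "talagrand n \<epsilon> =
     map_pmf (\<lambda>f l. if l \<in> {1..tal_L n \<epsilon>} then f l ` {1..tal_k n \<epsilon>} else {})
       (pmf_of_set (PiE {1..tal_L n \<epsilon>} (\<lambda>_. PiE {1..tal_k n \<epsilon>} (\<lambda>_. {1..n}))))"

text \<open>A point x in {0,1}^n is represented by its support X \<subseteq> {1..n}, so |x| = card X.
  T_l(x) = 1 iff every j in T_l has x_j = 1, i.e. T_l \<subseteq> X.\<close>
definition tal_S :: "nat \<Rightarrow> real \<Rightarrow> (nat \<Rightarrow> nat set) \<Rightarrow> nat set \<Rightarrow> nat set" where
  "tal_S n \<epsilon> T X = {l \<in> {1..tal_L n \<epsilon>}. T l \<subseteq> X}"

end

theory Submission
  imports Defs
begin

text \<open>Each \<open>T\<^sub>l\<close> lies inside the support of \<open>x\<close> independently with probability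
  \<open>p = (|x|/n)\<^sup>k\<close>, so \<open>|S\<^sub>T(x)|\<close> is binomial and the event has probability
  \<open>L p (1 - p)\<^bsup>L-1\<^esup> \<ge> L p (1 - L p)\<close> by Bernoulli's inequality.
  The weight condition gives \<open>1/2 \<le> |x|/n \<le> (1 + 0.1 \<epsilon>/\<surd>n)/2\<close>; as \<open>k \<approx> \<surd>n/\<epsilon>\<close>
  the factor \<open>(2|x|/n)\<^sup>k\<close> is at most \<open>exp (1/5)\<close>, which keeps the mean \<open>L p\<close>
  between \<open>1/10\<close> and \<open>7/16\<close>, where \<open>L p (1 - L p) > 0.03\<close>.\<close>

lemma card_PiE_exactly_one:
  assumes "finite I" "finite A" "G \<subseteq> A"
  shows "card {f \<in> PiE I (\<lambda>_. A). card {i \<in> I. f i \<in> G} = 1}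
         = card I * card G * (card A - card G) ^ (card I - 1)"
proof -
  have "finite G" using assms(2,3) by (rule finite_subset[rotated])
  define P where "P i\<^sub>0 = PiE I (\<lambda>i. if i = i\<^sub>0 then G else A - G)" for i\<^sub>0
  have "{f \<in> PiE I (\<lambda>_. A). card {i \<in> I. f i \<in> G} = 1} = (\<Union>i\<^sub>0\<in>I. P i\<^sub>0)"
  proof (intro equalityI subsetI)
    fix f assume "f \<in> {f \<in> PiE I (\<lambda>_. A). card {i \<in> I. f i \<in> G} = 1}"
    then obtain i\<^sub>0 where f: "f \<in> PiE I (\<lambda>_. A)" and "{i \<in> I. f i \<in> G} = {i\<^sub>0}"
      by (auto simp: card_1_singleton_iff)
    then have "i\<^sub>0 \<in> I" "\<And>i. i \<in> I \<Longrightarrow> f i \<in> G \<longleftrightarrow> i = i\<^sub>0" by blast+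
    with f show "f \<in> (\<Union>i\<^sub>0\<in>I. P i\<^sub>0)"
      unfolding P_def by (auto simp: PiE_iff)
  next
    fix f assume "f \<in> (\<Union>i\<^sub>0\<in>I. P i\<^sub>0)"
    then obtain i\<^sub>0 where "i\<^sub>0 \<in> I" "f \<in> P i\<^sub>0" by blast
    then have "f \<in> PiE I (\<lambda>_. A)" "{i \<in> I. f i \<in> G} = {i\<^sub>0}"
      using assms(3) unfolding P_def by (auto simp: PiE_iff split: if_splits)
    then show "f \<in> {f \<in> PiE I (\<lambda>_. A). card {i \<in> I. f i \<in> G} = 1}" by simp
  qed
  moreover have "card (P i\<^sub>0) = card G * (card A - card G) ^ (card I - 1)" if "i\<^sub>0 \<in> I" for i\<^sub>0
  proof -
    have "card (P i\<^sub>0) = card G * (\<Prod>i\<in>I - {i\<^sub>0}. card (A - G))"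
      unfolding P_def card_PiE[OF assms(1)] using assms(1) that by (subst prod.remove) auto
    then show ?thesis
      using assms that by (simp add: card_Diff_subset finite_subset)
  qed
  moreover have "card (\<Union>i\<^sub>0\<in>I. P i\<^sub>0) = (\<Sum>i\<^sub>0\<in>I. card (P i\<^sub>0))"
    using assms \<open>finite G\<close> unfolding P_def
    by (intro card_UN_disjoint) (auto simp: PiE_iff intro!: finite_PiE dest!: bspec)
  ultimately show ?thesis by simp
qed

lemma prob_exactly_one_in_pmf_of_PiE:
  assumes "finite I" "finite A" "A \<noteq> {}" "G \<subseteq> A"
  defines "(p::real) \<equiv> card G / card A"
  shows "measure_pmf.prob (pmf_of_set (PiE I (\<lambda>_. A))) {f. card {i \<in> I. f i \<in> G} = 1}
         = real (card I) * p * (1 - p) ^ (card I - 1)"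
proof (cases "I = {}")
  case True
  then show ?thesis by (simp add: measure_pmf_of_set)
next
  case False
  define m where "m = card I - 1"
  have cI: "card I = Suc m" using False assms(1) unfolding m_def by (simp add: card_gt_0_iff)
  have "real (card A) > 0" using assms(2,3) by (simp add: card_gt_0_iff)
  have "card G \<le> card A" using assms(2,4) by (rule card_mono)
  then have "1 - p = real (card A - card G) / card A" unfolding p_def using \<open>real (card A) > 0\<close>
    by (simp add: of_nat_diff field_simps)
  have "PiE I (\<lambda>_. A) \<noteq> {}" using assms(3) by (simp add: PiE_eq_empty_iff)
  then have "measure_pmf.prob (pmf_of_set (PiE I (\<lambda>_. A))) {f. card {i \<in> I. f i \<in> G} = 1}
      = card {f \<in> PiE I (\<lambda>_. A). card {i \<in> I. f i \<in> G} = 1} / card (PiE I (\<lambda>_. A))"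
    using assms(1,2) by (simp add: measure_pmf_of_set finite_PiE Int_def)
  also have "\<dots> = real (card I * card G * (card A - card G) ^ m) / real (card A ^ card I)"
    using assms(1,2,4) by (simp only: card_PiE_exactly_one card_PiE prod_constant cI diff_Suc_1)
  also have "\<dots> = real (card I) * p * (1 - p) ^ m"
    unfolding \<open>1 - p = _\<close> unfolding p_def cI by (simp add: power_divide algebra_simps)
  finally show ?thesis by (simp add: m_def)
qed

lemma exactly_one_success_prob_gt:
  fixes p :: real and L :: nat
  assumes "1/10 \<le> L * p" "L * p \<le> 7/16" "0 \<le> p"
  shows "L * p * (1 - p) ^ (L - 1) > 0.03"
proof -
  have "L \<ge> 1" using assms(1) by (cases L) auto
  then have "p \<le> 1" using assms(2,3) mult_right_mono[of 1 "real L" p] by simp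
  have "1 - L * p \<le> 1 + real (L - 1) * (- p)"
    using assms(3) \<open>L \<ge> 1\<close> by (simp add: of_nat_diff algebra_simps)
  also have "\<dots> \<le> (1 - p) ^ (L - 1)"
    using Bernoulli_inequality[of "- p" "L - 1"] \<open>p \<le> 1\<close> by simp
  finally have "1/10 * (9/16) \<le> L * p * (1 - p) ^ (L - 1)"
    using assms(1,2) by (intro mult_mono) auto
  then show ?thesis by simp
qed

lemma tal_k_0 [simp]: "tal_k 0 \<epsilon> = 0"
  by (simp add: tal_k_def)

lemma prob_card_tal_S_eq_1:
  fixes n :: nat and \<epsilon> :: real and X :: "nat set"
  assumes "X \<subseteq> {1..n}"
  defines "(p::real) \<equiv> (card X / n) ^ tal_k n \<epsilon>"
  shows "measure_pmf.prob (talagrand n \<epsilon>) {T. card (tal_S n \<epsilon> T X) = 1}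
         = real (tal_L n \<epsilon>) * p * (1 - p) ^ (tal_L n \<epsilon> - 1)"
proof -
  define k L where "k = tal_k n \<epsilon>" and "L = tal_L n \<epsilon>"
  define A G where "A = PiE {1..k} (\<lambda>_. {1..n})" and "G = PiE {1..k} (\<lambda>_. X)"
  define rows where "rows f l = (if l \<in> {1..L} then f l ` {1..k} else {})"
    for f :: "nat \<Rightarrow> nat \<Rightarrow> nat" and l
  have talagrand_eq: "talagrand n \<epsilon> = map_pmf rows (pmf_of_set (PiE {1..L} (\<lambda>_. A)))"
    unfolding talagrand_def rows_def A_def k_def L_def ..
  have "n = 0 \<Longrightarrow> k = 0" by (simp add: k_def)
  then have A: "finite A" "A \<noteq> {}" "G \<subseteq> A"
    using assms(1) by (auto simp: A_def G_def finite_PiE PiE_eq_empty_iff PiE_iff)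
  have "card G / card A = p"
    by (simp add: A_def G_def p_def k_def card_PiE power_divide)
  have "card (tal_S n \<epsilon> (rows f) X) = 1 \<longleftrightarrow> card {l \<in> {1..L}. f l \<in> G} = 1"
    if "f \<in> PiE {1..L} (\<lambda>_. A)" for f
  proof -
    have "tal_S n \<epsilon> (rows f) X = {l \<in> {1..L}. f l \<in> G}"
      using that by (auto simp: tal_S_def rows_def L_def A_def G_def PiE_iff)
    then show ?thesis by simp
  qed
  then have "measure_pmf.prob (talagrand n \<epsilon>) {T. card (tal_S n \<epsilon> T X) = 1}
      = measure_pmf.prob (pmf_of_set (PiE {1..L} (\<lambda>_. A))) {f. card {l \<in> {1..L}. f l \<in> G} = 1}"
    unfolding talagrand_eq measure_map_pmf using A
    by (intro measure_prob_cong_0) (auto simp: finite_PiE PiE_eq_empty_iff indicator_def)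
  also have "\<dots> = real L * p * (1 - p) ^ (L - 1)"
    using prob_exactly_one_in_pmf_of_PiE[of "{1..L}" A G] A \<open>card G / card A = p\<close> by simp
  finally show ?thesis by (simp add: L_def)
qed

lemma real_nat_ceiling_less: "0 \<le> x \<Longrightarrow> real (nat \<lceil>x\<rceil>) < x + 1"
  using ceiling_correct[of x] by (simp add: of_nat_int_ceiling)

lemma tal_k_bounds:
  assumes "0 < \<epsilon>"
  shows "sqrt n / \<epsilon> \<le> tal_k n \<epsilon>" "tal_k n \<epsilon> < sqrt n / \<epsilon> + 1"
  using assms real_nat_ceiling_less[of "sqrt n / \<epsilon>"] by (simp_all add: tal_k_def real_nat_ceiling_ge)

lemma tal_L_bounds:
  "0.1 * 2 ^ tal_k n \<epsilon> \<le> tal_L n \<epsilon>" "tal_L n \<epsilon> < 0.1 * 2 ^ tal_k n \<epsilon> + 1"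
  using real_nat_ceiling_less[of "0.1 * 2 ^ tal_k n \<epsilon>"] by (simp_all add: tal_L_def real_nat_ceiling_ge)

lemma tal_success_rate_ge:
  fixes q :: real
  assumes "1/2 \<le> q"
  shows "1/10 \<le> tal_L n \<epsilon> * q ^ tal_k n \<epsilon>"
proof -
  have "1/10 = 0.1 * 2 ^ tal_k n \<epsilon> * (1/2 :: real) ^ tal_k n \<epsilon>"
    by (simp add: power_one_over)
  also have "\<dots> \<le> tal_L n \<epsilon> * q ^ tal_k n \<epsilon>"
    using assms tal_L_bounds(1) by (intro mult_mono power_mono) auto
  finally show ?thesis .
qed

lemma tal_success_rate_le:
  fixes q \<epsilon> :: real and n :: nat
  assumes "0 < \<epsilon>" "\<epsilon> < 1" "1 \<le> n" "0 \<le> q" "2 * q \<le> 1 + 0.1 * \<epsilon> / sqrt n"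
  shows "tal_L n \<epsilon> * q ^ tal_k n \<epsilon> \<le> 7/16"
proof -
  define k a where "k = tal_k n \<epsilon>" and "a = 0.1 * \<epsilon> / sqrt n"
  have "1 \<le> sqrt n" using assms(3) by simp
  then have "\<epsilon> < sqrt n" using assms(2) by linarith
  then have "1 < sqrt n / \<epsilon>" and "0 \<le> a" "a \<le> 0.1"
    using assms(1) by (simp_all add: a_def field_simps divide_le_eq)
  then have "2 \<le> k"
    using tal_k_bounds(1)[OF assms(1), of n] unfolding k_def by linarith
  have "k * a < (sqrt n / \<epsilon> + 1) * a"
    using tal_k_bounds(2)[OF assms(1), of n] assms(1,3) unfolding k_def a_def
    by (intro mult_strict_right_mono) auto
  also have "\<dots> = 0.1 + a" using assms(1,3) by (simp add: a_def field_simps)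
  finally have "k * a \<le> 1/5" using \<open>a \<le> 0.1\<close> by simp
  have "(2 * q) ^ k \<le> exp a ^ k"
    using assms(4,5) exp_ge_add_one_self[of a] by (intro power_mono) (auto simp only: a_def)
  also have "\<dots> = exp (k * a)" by (simp add: exp_of_nat_mult)
  also have "\<dots> \<le> exp (1/5)" using \<open>k * a \<le> 1/5\<close> by simp
  also have "\<dots> \<le> 31/25" using exp_bound[of "1/5"] by (simp add: power2_eq_square)
  finally have growth: "(2 * q) ^ k \<le> 31/25" .
  have "(1/2 :: real) ^ k \<le> (1/2) ^ 2" using \<open>2 \<le> k\<close> by (intro power_decreasing) auto
  then have "(1/2 :: real) ^ k \<le> 1/4" by (simp add: power2_eq_square)
  have "tal_L n \<epsilon> * (1/2) ^ k \<le> (0.1 * 2 ^ k + 1) * (1/2 :: real) ^ k"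
    using tal_L_bounds(2)[of n \<epsilon>] unfolding k_def by (intro mult_right_mono) auto
  also have "\<dots> = 0.1 + (1/2) ^ k" by (simp add: power_one_over add_divide_distrib)
  also have "\<dots> \<le> 0.1 + 1/4" using \<open>(1/2 :: real) ^ k \<le> 1/4\<close> by simp
  finally have "tal_L n \<epsilon> * (1/2) ^ k * (2 * q) ^ k \<le> (0.1 + 1/4) * (31/25)"
    using growth assms(4) by (intro mult_mono) auto
  moreover have "tal_L n \<epsilon> * q ^ k = tal_L n \<epsilon> * (1/2) ^ k * (2 * q) ^ k"
    unfolding mult.assoc power_mult_distrib[symmetric] by simp
  ultimately have "tal_L n \<epsilon> * q ^ k \<le> (0.1 + 1/4) * (31/25)" by (simp only:)
  then show ?thesis unfolding k_def by simp
qed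

theorem mainTheorem4:
  fixes n :: nat and \<epsilon> :: real and X :: "nat set"
  assumes "0 < \<epsilon>" and "\<epsilon> < 1"
    and "X \<subseteq> {1..n}"
    and "real n / 2 \<le> real (card X)"
    and "real (card X) \<le> real n / 2 + 0.05 * \<epsilon> * sqrt (real n)"
  shows "measure_pmf.prob (talagrand n \<epsilon>) {T. card (tal_S n \<epsilon> T X) = 1} > 0.03"
proof (cases "n = 0")
  case True
  have "\<lceil>1/10 :: real\<rceil> = 1" by (simp add: ceiling_eq_iff)
  with True have "X = {}" and "tal_L n \<epsilon> = 1"
    using assms(3) by (auto simp: tal_L_def)
  then show ?thesis using prob_card_tal_S_eq_1[OF assms(3)] True by simp
next
  case False
  define q where "q = card X / n"
  have "1/2 \<le> q" using assms(4) False by (simp add: q_def field_simps)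
  have "2 * q \<le> (n + 0.1 * \<epsilon> * sqrt n) / n"
    using assms(5) False by (simp add: q_def field_simps)
  also have "\<dots> = 1 + 0.1 * \<epsilon> / sqrt n"
    using False real_div_sqrt[of n] by (simp add: field_simps)
  finally have "2 * q \<le> 1 + 0.1 * \<epsilon> / sqrt n" .
  with \<open>1/2 \<le> q\<close>
  have "1/10 \<le> tal_L n \<epsilon> * q ^ tal_k n \<epsilon>" "tal_L n \<epsilon> * q ^ tal_k n \<epsilon> \<le> 7/16"
    using tal_success_rate_ge tal_success_rate_le assms(1,2) False by auto
  then show ?thesis
    using prob_card_tal_S_eq_1[OF assms(3)] exactly_one_success_prob_gt \<open>1/2 \<le> q\<close>
    by (simp add: q_def)
qed

end
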